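(* Consider the class of three-valued logics (as defined in the context) that are paraconsistent and have properties (a) and (b). There are exactly 32 logics in this class whose logical equivalence relation $\equiv$ satisfies, for all formulas $A,B$, all of the following: (1) $A\wedge\bot \equiv \bot$; (2) $A\vee\top\equiv\top$; (3) $A\wedge\top\equiv A$; (4) $A\vee\bot\equiv A$; (5) $A\wedge A\equiv A$; (6) $A\vee A\equiv A$; (7) $A\wedge B\equiv B\wedge A$; (8) $A\vee B\equiv B\vee A$.
   Context: Formulas are built from a countably infinite set of propositional variables, the constant $\bot$, the unary connective $\neg$ and the binary connectives $\wedge,\vee,\to$; $\top$ abbreviates $\neg\bot$. Let $V=\{t,f,b\}$. A three-valued logic is specified by truth functions $\neg^M:V\to V$ and $\wedge^M,\vee^M,\to^M:V^2\to V$ that agree with the classical truth functions of negation, conjunction, disjunction and material implication on $\{t,f\}$, with $\bot$ interpreted as $f$; two logics are different iff at least one of these truth functions differs. A valuation is a map $\nu$ from formulas to $V$ with $\nu(\bot)=f$, $\nu(\neg A)=\neg^M(\nu(A))$, $\nu(A\wedge B)=\wedge^M(\nu(A),\nu(B))$, and similarly for $\vee,\to$ (values on propositional variables are arbitrary). The designated values are $t$ and $b$: $\Gamma\models A$ iff for every valuation $\nu$, either $\nu(A')=f$ for some $A'\in\Gamma$ or $\nu(A)\in\{t,b\}$. The logic is paraconsistent if there are formulas $A,B$ with $\{A,\neg A\}\not\models B$. Its logical equivalence relation is: $A\equiv B$ iff $\nu(A)=\nu(B)$ for every valuation $\nu$. Property (a): for every set of formulas $\Gamma$ and formula $A$, $\Gamma\models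 A$ implies $\Gamma\models_{\mathrm{CPL}}A$, where $\models_{\mathrm{CPL}}$ is the consequence relation of classical propositional logic (with $\bot$ false, $\to$ material implication). Property (b): for all sets $\Gamma$ and formulas $A,B,C$: (b1) $\Gamma\cup\{A\}\models B$ iff $\Gamma\models A\to B$; (b2) $\Gamma\models A\wedge B$ iff $\Gamma\models A$ and $\Gamma\models B$; (b3) $\Gamma\cup\{A\vee B\}\models C$ iff $\Gamma\cup\{A\}\models C$ and $\Gamma\cup\{B\}\models C$. *)

theory Defs
  imports Main
begin

datatype tv = T | F | B

datatype form = Var nat | Bot | Neg form | Conj form form | Disj form form | Imp form form

definition Top :: form where "Top = Neg Bot"

record logic =
  negM  :: "tv \<Rightarrow> tv"
  conjM :: "tv \<Rightarrow> tv \<Rightarrow> tv"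
  disjM :: "tv \<Rightarrow> tv \<Rightarrow> tv"
  impM  :: "tv \<Rightarrow> tv \<Rightarrow> tv"

definition tv_of_bool :: "bool \<Rightarrow> tv" where
  "tv_of_bool p = (if p then T else F)"

definition classical_on_tf :: "logic \<Rightarrow> bool" where
  "classical_on_tf L \<longleftrightarrow>
     (\<forall>p. negM L (tv_of_bool p) = tv_of_bool (\<not> p)) \<and>
     (\<forall>p q. conjM L (tv_of_bool p) (tv_of_bool q) = tv_of_bool (p \<and> q)) \<and>
     (\<forall>p q. disjM L (tv_of_bool p) (tv_of_bool q) = tv_of_bool (p \<or> q)) \<and>
     (\<forall>p q. impM L (tv_of_bool p) (tv_of_bool q) = tv_of_bool (p \<longrightarrow> q))"

fun eval :: "logic \<Rightarrow> (nat \<Rightarrow> tv) \<Rightarrow> form \<Rightarrow> tv" where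
  "eval L v (Var n) = v n"
| "eval L v Bot = F"
| "eval L v (Neg A) = negM L (eval L v A)"
| "eval L v (Conj A C) = conjM L (eval L v A) (eval L v C)"
| "eval L v (Disj A C) = disjM L (eval L v A) (eval L v C)"
| "eval L v (Imp A C) = impM L (eval L v A) (eval L v C)"

definition designated :: "tv \<Rightarrow> bool" where
  "designated x \<longleftrightarrow> x = T \<or> x = B"

definition conseq :: "logic \<Rightarrow> form set \<Rightarrow> form \<Rightarrow> bool" where
  "conseq L \<Gamma> A \<longleftrightarrow>
     (\<forall>v. (\<exists>A'\<in>\<Gamma>. eval L v A' = F) \<or> designated (eval L v A))"

fun ceval :: "(nat \<Rightarrow> bool) \<Rightarrow> form \<Rightarrow> bool" where
  "ceval v (Var n) = v n"
| "ceval v Bot = False"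
| "ceval v (Neg A) = (\<not> ceval v A)"
| "ceval v (Conj A C) = (ceval v A \<and> ceval v C)"
| "ceval v (Disj A C) = (ceval v A \<or> ceval v C)"
| "ceval v (Imp A C) = (ceval v A \<longrightarrow> ceval v C)"

definition cpl_conseq :: "form set \<Rightarrow> form \<Rightarrow> bool" where
  "cpl_conseq \<Gamma> A \<longleftrightarrow> (\<forall>v. (\<forall>A'\<in>\<Gamma>. ceval v A') \<longrightarrow> ceval v A)"

definition paraconsistent :: "logic \<Rightarrow> bool" where
  "paraconsistent L \<longleftrightarrow> (\<exists>A C. \<not> conseq L {A, Neg A} C)"

definition prop_a :: "logic \<Rightarrow> bool" where
  "prop_a L \<longleftrightarrow> (\<forall>\<Gamma> A. conseq L \<Gamma> A \<longrightarrow> cpl_conseq \<Gamma> A)"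

definition prop_b :: "logic \<Rightarrow> bool" where
  "prop_b L \<longleftrightarrow> (\<forall>\<Gamma> A C D.
     (conseq L (\<Gamma> \<union> {A}) C \<longleftrightarrow> conseq L \<Gamma> (Imp A C)) \<and>
     (conseq L \<Gamma> (Conj A C) \<longleftrightarrow> conseq L \<Gamma> A \<and> conseq L \<Gamma> C) \<and>
     (conseq L (\<Gamma> \<union> {Disj A C}) D \<longleftrightarrow>
        conseq L (\<Gamma> \<union> {A}) D \<and> conseq L (\<Gamma> \<union> {C}) D))"

definition lequiv :: "logic \<Rightarrow> form \<Rightarrow> form \<Rightarrow> bool" where
  "lequiv L A C \<longleftrightarrow> (\<forall>v. eval L v A = eval L v C)"

definition lattice_laws :: "logic \<Rightarrow> bool" where
  "lattice_laws L \<longleftrightarrow> (\<forall>A C.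
     lequiv L (Conj A Bot) Bot \<and>
     lequiv L (Disj A Top) Top \<and>
     lequiv L (Conj A Top) A \<and>
     lequiv L (Disj A Bot) A \<and>
     lequiv L (Conj A A) A \<and>
     lequiv L (Disj A A) A \<and>
     lequiv L (Conj A C) (Conj C A) \<and>
     lequiv L (Disj A C) (Disj C A))"

end

theory Submission
  imports Defs
begin

text \<open>
  Since only the value F is undesignated, consequence depends only on whether a value is F.
  The lattice laws, whose instances at variables are equations between truth functions, force
  conjunction and disjunction to be the strong Kleene ones with b as middle value.
  Paraconsistency forces \<open>\<not>b \<noteq> f\<close>; the deduction theorem (b1) forces \<open>b \<rightarrow> f = f\<close> and
  \<open>x \<rightarrow> y \<noteq> f\<close> whenever \<open>x = f\<close> or \<open>y \<noteq> f\<close>. What remains free are the five entries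
  \<open>\<not>b, t \<rightarrow> b, f \<rightarrow> b, b \<rightarrow> t, b \<rightarrow> b\<close>, each in \<open>{t, b}\<close>, and every such choice yields a
  logic with all the required properties: \<open>2^5 = 32\<close>.
\<close>

definition kleene_conj :: "tv \<Rightarrow> tv \<Rightarrow> tv" where
  "kleene_conj x y = (if x = F \<or> y = F then F else if x = T \<and> y = T then T else B)"

definition kleene_disj :: "tv \<Rightarrow> tv \<Rightarrow> tv" where
  "kleene_disj x y = (if x = T \<or> y = T then T else if x = F \<and> y = F then F else B)"

definition classical_neg :: "tv \<Rightarrow> tv \<Rightarrow> tv" where
  "classical_neg n x = (case x of T \<Rightarrow> F | F \<Rightarrow> T | B \<Rightarrow> n)"

definition classical_imp :: "tv \<Rightarrow> tv \<Rightarrow> tv \<Rightarrow> tv \<Rightarrow> tv \<Rightarrow> tv \<Rightarrow> tv" where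
  "classical_imp a b c d x y = (case x of
      T \<Rightarrow> (case y of T \<Rightarrow> T | F \<Rightarrow> F | B \<Rightarrow> a)
    | F \<Rightarrow> (case y of T \<Rightarrow> T | F \<Rightarrow> T | B \<Rightarrow> b)
    | B \<Rightarrow> (case y of T \<Rightarrow> c | F \<Rightarrow> F | B \<Rightarrow> d))"

definition kleene_logic :: "tv \<times> tv \<times> tv \<times> tv \<times> tv \<Rightarrow> logic" where
  "kleene_logic = (\<lambda>(n, a, b, c, d).
     \<lparr>negM = classical_neg n, conjM = kleene_conj, disjM = kleene_disj,
      impM = classical_imp a b c d\<rparr>)"

lemma tv_cases_disj: "x = T \<or> x = F \<or> x = B"
  by (cases x) auto

lemma designated_iff_not_F: "designated x \<longleftrightarrow> x \<noteq> F"
  by (cases x) (auto simp: designated_def)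

lemma conseq_iff_not_F:
  "conseq L \<Gamma> A \<longleftrightarrow> (\<forall>v. (\<forall>A'\<in>\<Gamma>. eval L v A' \<noteq> F) \<longrightarrow> eval L v A \<noteq> F)"
  unfolding conseq_def designated_iff_not_F by blast

lemma conseq_not_F:
  assumes "conseq L \<Gamma> A" and "\<forall>A'\<in>\<Gamma>. eval L v A' \<noteq> F"
  shows "eval L v A \<noteq> F"
  using assms unfolding conseq_iff_not_F by blast

lemma eval_tv_of_bool:
  assumes "classical_on_tf L"
  shows "eval L (tv_of_bool \<circ> w) A = tv_of_bool (ceval w A)"
  using assms by (induction A) (auto simp: classical_on_tf_def tv_of_bool_def)

lemma classical_on_tf_imp_prop_a:
  assumes "classical_on_tf L"
  shows "prop_a L"
  unfolding prop_a_def cpl_conseq_def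
proof (intro allI impI)
  fix \<Gamma> A w
  assume "conseq L \<Gamma> A" and \<Gamma>: "\<forall>A'\<in>\<Gamma>. ceval w A'"
  then have "(\<exists>A'\<in>\<Gamma>. eval L (tv_of_bool \<circ> w) A' = F) \<or> designated (eval L (tv_of_bool \<circ> w) A)"
    unfolding conseq_def by blast
  with \<Gamma> show "ceval w A"
    by (auto simp: eval_tv_of_bool[OF assms] tv_of_bool_def designated_def split: if_splits)
qed

lemma prop_b_if_classical_truth_conditions:
  assumes "\<And>x y. impM L x y \<noteq> F \<longleftrightarrow> x = F \<or> y \<noteq> F"
    and "\<And>x y. conjM L x y \<noteq> F \<longleftrightarrow> x \<noteq> F \<and> y \<noteq> F"
    and "\<And>x y. disjM L x y \<noteq> F \<longleftrightarrow> x \<noteq> F \<or> y \<noteq> F"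
  shows "prop_b L"
  unfolding prop_b_def conseq_iff_not_F using assms by auto

lemma kleene_logic_properties:
  assumes "n \<in> {T, B}" "a \<in> {T, B}" "b \<in> {T, B}" "c \<in> {T, B}" "d \<in> {T, B}"
  defines "L \<equiv> kleene_logic (n, a, b, c, d)"
  shows "classical_on_tf L \<and> paraconsistent L \<and> prop_a L \<and> prop_b L \<and> lattice_laws L"
proof (intro conjI)
  show "classical_on_tf L"
    by (auto simp: L_def kleene_logic_def classical_on_tf_def tv_of_bool_def classical_neg_def
        kleene_conj_def kleene_disj_def classical_imp_def)
  then show "prop_a L"
    by (rule classical_on_tf_imp_prop_a)
  have "\<not> conseq L {Var 0, Neg (Var 0)} Bot"
    using assms(1) by (auto simp: conseq_def L_def kleene_logic_def classical_neg_def
        designated_def intro!: exI[of _ "\<lambda>_. B"])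
  then show "paraconsistent L"
    unfolding paraconsistent_def by blast
  show "prop_b L"
    using assms(2-5) by (intro prop_b_if_classical_truth_conditions)
      (auto simp: L_def kleene_logic_def kleene_conj_def kleene_disj_def classical_imp_def
        split: tv.splits)
  have "kleene_conj x F = F \<and> kleene_disj x T = T \<and> kleene_conj x T = x \<and> kleene_disj x F = x
      \<and> kleene_conj F x = F \<and> kleene_disj T x = T \<and> kleene_conj T x = x \<and> kleene_disj F x = x
      \<and> kleene_conj x x = x \<and> kleene_disj x x = x
      \<and> kleene_conj x y = kleene_conj y x \<and> kleene_disj x y = kleene_disj y x" for x y
    using tv_cases_disj[of x] tv_cases_disj[of y] by (auto simp: kleene_conj_def kleene_disj_def)
  then show "lattice_laws L"
    by (simp add: lattice_laws_def lequiv_def Top_def L_def kleene_logic_def classical_neg_def)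
qed

lemma classical_on_tf_tables:
  assumes "classical_on_tf L"
  shows "negM L T = F" "negM L F = T"
    and "impM L T T = T" "impM L T F = F" "impM L F T = T" "impM L F F = T"
  using assms unfolding classical_on_tf_def
  by (metis (full_types) tv_of_bool_def)+

lemma paraconsistent_neg_B:
  assumes "paraconsistent L" and "negM L T = F"
  shows "negM L B \<noteq> F"
proof
  assume "negM L B = F"
  from \<open>paraconsistent L\<close> obtain A C where "\<not> conseq L {A, Neg A} C"
    unfolding paraconsistent_def by blast
  then obtain v where "eval L v A \<noteq> F" "negM L (eval L v A) \<noteq> F"
    unfolding conseq_iff_not_F by auto
  with \<open>negM L B = F\<close> \<open>negM L T = F\<close> show False
    using tv_cases_disj[of "eval L v A"] by auto
qed

lemma lattice_laws_truth_functions: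
  assumes "lattice_laws L" and "negM L F = T"
  shows "conjM L x F = F" "disjM L x T = T" "conjM L x T = x" "disjM L x F = x"
    "conjM L x x = x" "disjM L x x = x" "conjM L x y = conjM L y x" "disjM L x y = disjM L y x"
proof -
  define v where "v = (\<lambda>n::nat. if n = 0 then x else y)"
  have eval_eq: "eval L v P = eval L v Q" if "lequiv L P Q" for P Q
    using that unfolding lequiv_def by blast
  from \<open>lattice_laws L\<close> have
    "lequiv L (Conj (Var 0) Bot) Bot" "lequiv L (Disj (Var 0) Top) Top"
    "lequiv L (Conj (Var 0) Top) (Var 0)" "lequiv L (Disj (Var 0) Bot) (Var 0)"
    "lequiv L (Conj (Var 0) (Var 0)) (Var 0)" "lequiv L (Disj (Var 0) (Var 0)) (Var 0)"
    "lequiv L (Conj (Var 0) (Var 1)) (Conj (Var 1) (Var 0))"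
    "lequiv L (Disj (Var 0) (Var 1)) (Disj (Var 1) (Var 0))"
    unfolding lattice_laws_def by blast+
  then show "conjM L x F = F" "disjM L x T = T" "conjM L x T = x" "disjM L x F = x"
    "conjM L x x = x" "disjM L x x = x" "conjM L x y = conjM L y x" "disjM L x y = disjM L y x"
    by (auto dest!: eval_eq simp: v_def Top_def \<open>negM L F = T\<close>)
qed

lemma lattice_laws_conj_disj:
  assumes "lattice_laws L" and "negM L F = T"
  shows "conjM L = kleene_conj" "disjM L = kleene_disj"
proof -
  note laws = lattice_laws_truth_functions[OF assms]
  show "conjM L = kleene_conj"
  proof (intro ext)
    fix x y
    show "conjM L x y = kleene_conj x y"
      using laws(1,3,5)[of x] laws(1,3)[of y] laws(7)[of x y]
        tv_cases_disj[of x] tv_cases_disj[of y]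
      by (auto simp: kleene_conj_def)
  qed
  show "disjM L = kleene_disj"
  proof (intro ext)
    fix x y
    show "disjM L x y = kleene_disj x y"
      using laws(2,4,6)[of x] laws(2,4)[of y] laws(8)[of x y]
        tv_cases_disj[of x] tv_cases_disj[of y]
      by (auto simp: kleene_disj_def)
  qed
qed

lemma prop_b_imp_constraints:
  assumes "prop_b L"
  shows "impM L B F = F" "y \<noteq> F \<Longrightarrow> impM L x y \<noteq> F" "impM L F y \<noteq> F"
proof -
  have deduction: "conseq L (\<Gamma> \<union> {A}) C \<longleftrightarrow> conseq L \<Gamma> (Imp A C)" for \<Gamma> A C
    using assms unfolding prop_b_def by blast
  have "conseq L {Imp (Var 0) Bot} (Imp (Var 0) Bot)"
    by (simp add: conseq_iff_not_F)
  then have "conseq L ({Imp (Var 0) Bot} \<union> {Var 0}) Bot"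
    by (simp only: deduction)
  from conseq_not_F[OF this, of "\<lambda>_. B"] show "impM L B F = F"
    by auto
  have "conseq L ({Var 1} \<union> {Var 0}) (Var 1)"
    by (simp add: conseq_iff_not_F)
  then have "conseq L {Var 1} (Imp (Var 0) (Var 1))"
    by (simp only: deduction)
  from conseq_not_F[OF this, of "\<lambda>n. if n = 0 then x else y"] show "impM L x y \<noteq> F"
    if "y \<noteq> F"
    using that by simp
  have "conseq L ({} \<union> {Bot}) (Var 0)"
    by (simp add: conseq_iff_not_F)
  then have "conseq L {} (Imp Bot (Var 0))"
    by (simp only: deduction)
  from conseq_not_F[OF this, of "\<lambda>_. y"] show "impM L F y \<noteq> F"
    by simp
qed

lemma required_properties_imp_kleene_logic:
  assumes classical: "classical_on_tf L" and "paraconsistent L" "prop_b L" "lattice_laws L"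
  shows "L \<in> kleene_logic ` ({T, B} \<times> {T, B} \<times> {T, B} \<times> {T, B} \<times> {T, B})"
proof -
  note tables = classical_on_tf_tables[OF classical]
  note imp = prop_b_imp_constraints[OF \<open>prop_b L\<close>]
  define n a b c d where defs: "n = negM L B" "a = impM L T B" "b = impM L F B" "c = impM L B T"
    "d = impM L B B"
  have "negM L = classical_neg n"
    by (intro ext) (simp add: defs classical_neg_def tables split: tv.split)
  moreover have "impM L = classical_imp a b c d"
    by (intro ext) (simp add: defs classical_imp_def tables imp(1) split: tv.split)
  ultimately have "L = kleene_logic (n, a, b, c, d)"
    using lattice_laws_conj_disj[OF \<open>lattice_laws L\<close> tables(2)]
    by (cases L) (simp add: kleene_logic_def)
  moreover have "n \<in> {T, B}" "a \<in> {T, B}" "b \<in> {T, B}" "c \<in> {T, B}" "d \<in> {T, B}"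
    using paraconsistent_neg_B[OF \<open>paraconsistent L\<close> tables(1)] imp(2,3) tv_cases_disj
    by (auto simp: defs)
  ultimately show ?thesis
    by blast
qed

lemma inj_kleene_logic: "inj kleene_logic"
proof (rule injI)
  fix p q
  assume eq: "kleene_logic p = kleene_logic q"
  obtain n a b c d n' a' b' c' d' where "p = (n, a, b, c, d)" "q = (n', a', b', c', d')"
    by (cases p, cases q) auto
  moreover from eq have "negM (kleene_logic p) B = negM (kleene_logic q) B"
    "impM (kleene_logic p) T B = impM (kleene_logic q) T B"
    "impM (kleene_logic p) F B = impM (kleene_logic q) F B"
    "impM (kleene_logic p) B T = impM (kleene_logic q) B T"
    "impM (kleene_logic p) B B = impM (kleene_logic q) B B"
    by simp_all
  ultimately show "p = q"
    by (simp add: kleene_logic_def classical_neg_def classical_imp_def)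
qed

theorem corollary2:
  shows "card {L :: logic. classical_on_tf L \<and> paraconsistent L \<and> prop_a L \<and> prop_b L
                 \<and> lattice_laws L} = 32"
proof -
  let ?P = "{T, B} \<times> {T, B} \<times> {T, B} \<times> {T, B} \<times> {T, B}"
  have "{L. classical_on_tf L \<and> paraconsistent L \<and> prop_a L \<and> prop_b L \<and> lattice_laws L}
      = kleene_logic ` ?P"
    using required_properties_imp_kleene_logic kleene_logic_properties by fastforce
  moreover have "card (kleene_logic ` ?P) = card ?P"
    by (rule card_image, rule inj_on_subset[OF inj_kleene_logic subset_UNIV])
  ultimately show ?thesis
    by (simp add: card_cartesian_product)
qed

end
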